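(* Under the hypotheses below, there is a constant $C$ such that for every integer $i$ with $1\le i\le\alpha$ and all $t\in[0,T)$: $$u(x,t)\le\frac{C}{(T-t)^{\alpha-i}}\ \text{for } x\in\Omega_{i-1}\ \text{if } i\ne\alpha,\qquad u(x,t)\le -C\ln(T-t)\ \text{for } x\in\Omega_{i-1}\ \text{if } i=\alpha.$$
   Context: Standing assumptions: $\Omega\subset\mathbb{R}^N$ bounded, connected, smooth; $J\ge0$ symmetric, $\int J=1$, $J>0$ on $B(0,d)$, $J=0$ outside $B(0,d)$, and $J\in L^\infty(\mathbb{R}^N)$. Let $0<T<1$, $\alpha\ge1$, $h\in L^\infty(\mathbb{R}^N\setminus\Omega)$, $h\ge0$, $\int_\Omega\int_{\mathbb{R}^N\setminus\Omega}J(x-y)h(y)dydx>0$, $u_0\in L^\infty(\Omega)$, $u_0\ge0$, and $u$ the solution on $[0,T)$ of $u_t(x,t)=\int_\Omega J(x-y)(u(y,t)-u(x,t))dy+(T-t)^{-\alpha}\int_{\mathbb{R}^N\setminus\Omega}J(x-y)h(y)dy$, $x\in\Omega$, $u(\cdot,0)=u_0$. Sets: $\mathcal B_0=\operatorname{supp}(h)$, $\Omega_0=\Omega$, and recursively for $i\ge1$: $\mathcal B_i=\{x\in\Omega\setminus\bigcup_{1\le j<i}\mathcal B_j: \operatorname{dist}(x,\mathcal B_{i-1})<d\}$, $\Omega_i=\Omega_{i-1}\setminus\mathcal B_i$. *)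

theory Defs
  imports "HOL-Analysis.Analysis"
begin

coinductive smooth_fun :: "'a::euclidean_space set \<Rightarrow> ('a \<Rightarrow> real) \<Rightarrow> bool"
  for S where
  "continuous_on S f \<Longrightarrow>
   (\<forall>b\<in>Basis. \<exists>g. (\<forall>x\<in>S. ((\<lambda>s. f (x + s *\<^sub>R b)) has_real_derivative g x) (at 0))
                  \<and> smooth_fun S g)
   \<Longrightarrow> smooth_fun S f"

definition smooth_domain :: "'a::euclidean_space set \<Rightarrow> bool" where
  "smooth_domain \<Omega> \<longleftrightarrow> open \<Omega> \<and> bounded \<Omega> \<and> connected \<Omega> \<and> \<Omega> \<noteq> {} \<and>
     (\<forall>p\<in>frontier \<Omega>. \<exists>U \<phi>. open U \<and> p \<in> U \<and> smooth_fun U \<phi> \<and>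
        (\<forall>x\<in>U. \<exists>D. (\<phi> has_derivative D) (at x) \<and> D \<noteq> (\<lambda>_. 0)) \<and>
        \<Omega> \<inter> U = {x\<in>U. \<phi> x < 0})"

text \<open>Essential support of h viewed as an element of L-infinity of the
complement of Omega: points every neighbourhood of which meets the complement
of Omega in a set of positive measure on which h is nonzero.\<close>
definition ess_supp_out :: "'a::euclidean_space set \<Rightarrow> ('a \<Rightarrow> real) \<Rightarrow> 'a set" where
  "ess_supp_out \<Omega> h =
     {y. \<forall>e>0. emeasure lborel {z \<in> ball y e. z \<notin> \<Omega> \<and> h z \<noteq> 0} > 0}"

text \<open>The pair (B_i, Omega_i):  B_0 = supp h, Omega_0 = Omega,
  B_(i+1) = {x in Omega_i. dist(x, B_i) < d},  Omega_(i+1) = Omega_i - B_(i+1).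
  (Note Omega_i = Omega minus the union of B_1..B_i.)\<close>
primrec layer :: "'a::euclidean_space set \<Rightarrow> ('a \<Rightarrow> real) \<Rightarrow> real \<Rightarrow> nat \<Rightarrow> 'a set \<times> 'a set" where
  "layer \<Omega> h d 0 = (ess_supp_out \<Omega> h, \<Omega>)"
| "layer \<Omega> h d (Suc i) =
     (let B = fst (layer \<Omega> h d i); Oi = snd (layer \<Omega> h d i);
          B' = {x \<in> Oi. \<exists>y\<in>B. dist x y < d}
      in (B', Oi - B'))"

definition Bset :: "'a::euclidean_space set \<Rightarrow> ('a \<Rightarrow> real) \<Rightarrow> real \<Rightarrow> nat \<Rightarrow> 'a set" where
  "Bset \<Omega> h d i = fst (layer \<Omega> h d i)"

definition Omset :: "'a::euclidean_space set \<Rightarrow> ('a \<Rightarrow> real) \<Rightarrow> real \<Rightarrow> nat \<Rightarrow> 'a set" where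
  "Omset \<Omega> h d i = snd (layer \<Omega> h d i)"

text \<open>u is a solution on [0,T) of
  u_t(x,t) = int_Omega J(x-y)(u(y,t)-u(x,t)) dy + (T-t)^(-alpha) int_(R^N - Omega) J(x-y)h(y) dy,
  u(x,0) = u0(x):  for each t, u(.,t) is measurable on Omega, u is bounded on
  Omega x [0,t'] for every t' < T, and the equation holds pointwise in x with
  the time derivative taken within [0,T) (one-sided at t = 0).\<close>
definition is_solution ::
  "'a::euclidean_space set \<Rightarrow> ('a \<Rightarrow> real) \<Rightarrow> ('a \<Rightarrow> real) \<Rightarrow> real \<Rightarrow> real \<Rightarrow>
   ('a \<Rightarrow> real) \<Rightarrow> ('a \<Rightarrow> real \<Rightarrow> real) \<Rightarrow> bool" where
  "is_solution \<Omega> J h T \<alpha> u0 u \<longleftrightarrow>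
     (\<forall>t\<in>{0..<T}. set_borel_measurable lborel \<Omega> (\<lambda>y. u y t)) \<and>
     (\<forall>t'\<in>{0..<T}. \<exists>M. \<forall>y\<in>\<Omega>. \<forall>s\<in>{0..t'}. \<bar>u y s\<bar> \<le> M) \<and>
     (\<forall>x\<in>\<Omega>. u x 0 = u0 x) \<and>
     (\<forall>x\<in>\<Omega>. \<forall>t\<in>{0..<T}.
        ((\<lambda>s. u x s) has_real_derivative
           ((LINT y:\<Omega>|lborel. J (x - y) * (u y t - u x t)) +
            (T - t) powr (- \<alpha>) * (LINT y:(UNIV - \<Omega>)|lborel. J (x - y) * h y)))
        (at t within {0..<T}))"

end

theory Submission
  imports Defs
begin

(* The time derivative of u at x is a kernel average of u(y,t) - u(x,t) over the points y
   within distance d of x, plus the boundary flux (T - t)^(-alpha) times a bounded factor that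
   vanishes on Omega_1, whose points lie at distance at least d from supp h.  Hence on the
   layer X = Omega_(i-1) we have |u_t| <= 2 sup_X |u(.,t)| + K (T - t)^(-(p+1)) with
   p = alpha - i: for i = 1 the forcing is the flux, for i > 1 it is the bound already proved
   on Omega_(i-2), which contains every point of Omega within distance d of X.  A Gronwall
   argument for the supremum over X integrates the forcing, so each layer lowers the blow-up
   exponent by one, ending with a logarithm when p = 0. *)

lemma abs_diff_le_of_derivative_bound:
  fixes f g f' g' :: "real \<Rightarrow> real"
  assumes "a \<le> b" and "{a..b} \<subseteq> S"
    and f': "\<And>r. r \<in> {a..b} \<Longrightarrow> (f has_real_derivative f' r) (at r within S)"
    and g': "\<And>r. r \<in> {a..b} \<Longrightarrow> (g has_real_derivative g' r) (at r within S)"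
    and bound: "\<And>r. r \<in> {a..b} \<Longrightarrow> \<bar>f' r\<bar> \<le> g' r"
  shows "\<bar>f b - f a\<bar> \<le> g b - g a"
proof (cases "a = b")
  case False
  have cont: "continuous_on {a..b} \<phi>"
    if "\<And>r. r \<in> {a..b} \<Longrightarrow> (\<phi> has_real_derivative \<phi>' r) (at r within S)" for \<phi> \<phi>'
    using that \<open>{a..b} \<subseteq> S\<close> by (intro DERIV_continuous_on) (auto intro: has_field_derivative_subset)
  have at_interior: "at r within S = at r" if "a < r" "r < b" for r
    using that interior_mono[OF \<open>{a..b} \<subseteq> S\<close>] by (intro at_within_interior) auto
  have "norm (f b - f a) \<le> g b - g a"
  proof (rule differentiable_bound_general[where f' = f' and \<phi>' = g'])
    show "a < b" using \<open>a \<le> b\<close> False by simp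
    show "continuous_on {a..b} f" "continuous_on {a..b} g" using cont f' g' by blast+
    fix r assume r: "a < r" "r < b"
    then show "(f has_vector_derivative f' r) (at r)" "(g has_vector_derivative g' r) (at r)"
      using f'[of r] g'[of r] at_interior[OF r]
      by (auto simp: has_real_derivative_iff_has_vector_derivative[symmetric])
    show "norm (f' r) \<le> g' r" using bound r by simp
  qed
  then show ?thesis by simp
qed simp

lemma nondecreasing_of_nonneg_derivative:
  fixes Q q :: "real \<Rightarrow> real"
  assumes "a \<le> b" and "{a..b} \<subseteq> S"
    and Q': "\<And>r. r \<in> {a..b} \<Longrightarrow> (Q has_real_derivative q r) (at r within S)"
    and q_nonneg: "\<And>r. r \<in> {a..b} \<Longrightarrow> 0 \<le> q r"
  shows "Q a \<le> Q b"
  using abs_diff_le_of_derivative_bound[of a b S "\<lambda>_. 0" "\<lambda>_. 0" Q q] assms by simp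

(* Gronwall's inequality in discrete form: the supremum over X need not be measurable in t,
   but on a short interval, L (b - a) <= 1/2, the supremum N over X x [a, b] satisfies
   N <= A + N/2 + (Q b - Q a). *)
lemma sup_bound_step:
  fixes U D :: "'a \<Rightarrow> real \<Rightarrow> real" and Q q :: "real \<Rightarrow> real"
  assumes "L \<ge> 0" "a \<le> b" "L * (b - a) \<le> 1 / 2" "{a..b} \<subseteq> S"
    and U': "\<And>x r. x \<in> X \<Longrightarrow> r \<in> S \<Longrightarrow> (U x has_real_derivative D x r) (at r within S)"
    and Q': "\<And>r. r \<in> S \<Longrightarrow> (Q has_real_derivative q r) (at r within S)"
    and q_nonneg: "\<And>r. r \<in> S \<Longrightarrow> 0 \<le> q r"
    and D_bound: "\<And>r B x. r \<in> S \<Longrightarrow> \<forall>y\<in>X. \<bar>U y r\<bar> \<le> B \<Longrightarrow> x \<in> X \<Longrightarrow> \<bar>D x r\<bar> \<le> L * B + q r"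
    and U_bdd: "\<exists>M. \<forall>x\<in>X. \<forall>r\<in>{a..b}. \<bar>U x r\<bar> \<le> M"
    and U_a: "\<And>x. x \<in> X \<Longrightarrow> \<bar>U x a\<bar> \<le> A"
    and "x \<in> X" "r \<in> {a..b}"
  shows "\<bar>U x r\<bar> \<le> 2 * (A + Q b - Q a)"
proof -
  define N where "N = (SUP (y, s) \<in> X \<times> {a..b}. \<bar>U y s\<bar>)"
  have bdd: "bdd_above ((\<lambda>(y, s). \<bar>U y s\<bar>) ` (X \<times> {a..b}))"
    using U_bdd by (auto simp: bdd_above_def)
  have le_N: "\<bar>U y s\<bar> \<le> N" if "y \<in> X" "s \<in> {a..b}" for y s
    unfolding N_def using cSUP_upper[OF _ bdd, of "(y, s)"] that by simp
  have "0 \<le> N" using le_N[of x r] \<open>x \<in> X\<close> \<open>r \<in> {a..b}\<close> by linarith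
  have bound: "\<bar>U y s\<bar> \<le> A + N / 2 + (Q b - Q a)" if y: "y \<in> X" and s: "s \<in> {a..b}" for y s
  proof -
    have sub: "{a..s} \<subseteq> S" "{s..b} \<subseteq> S" using s \<open>{a..b} \<subseteq> S\<close> by auto
    have "\<bar>U y s - U y a\<bar> \<le> (L * N * s + Q s) - (L * N * a + Q a)"
    proof (rule abs_diff_le_of_derivative_bound[where S = S and f' = "D y" and g' = "\<lambda>r. L * N + q r"])
      show "a \<le> s" "{a..s} \<subseteq> S" using s sub by auto
      fix r assume "r \<in> {a..s}"
      then have "r \<in> S" "\<forall>z\<in>X. \<bar>U z r\<bar> \<le> N" using sub s le_N by auto
      then show "(U y has_real_derivative D y r) (at r within S)"
        and "((\<lambda>r. L * N * r + Q r) has_real_derivative L * N + q r) (at r within S)"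
        and "\<bar>D y r\<bar> \<le> L * N + q r"
        using U'[OF y] Q' D_bound[OF _ _ y] by (auto intro!: derivative_eq_intros)
    qed
    moreover have "Q s \<le> Q b"
      using s sub Q' q_nonneg by (intro nondecreasing_of_nonneg_derivative[where S = S and Q = Q and q = q]) auto
    moreover have "L * N * (s - a) \<le> N / 2"
    proof -
      have "L * N * (s - a) \<le> L * N * (b - a)"
        using s \<open>L \<ge> 0\<close> \<open>0 \<le> N\<close> by (intro mult_left_mono) auto
      also have "\<dots> = (L * (b - a)) * N" by simp
      also have "\<dots> \<le> (1 / 2) * N" using assms(3) \<open>0 \<le> N\<close> by (intro mult_right_mono)
      finally show ?thesis by simp
    qed
    moreover have "L * N * s + Q s - (L * N * a + Q a) = L * N * (s - a) + (Q s - Q a)"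
      by (simp add: algebra_simps)
    moreover have "\<bar>U y s\<bar> \<le> \<bar>U y a\<bar> + \<bar>U y s - U y a\<bar>" by linarith
    ultimately show ?thesis using U_a[OF y] by linarith
  qed
  have "(SUP (y, s) \<in> X \<times> {a..b}. \<bar>U y s\<bar>) \<le> A + N / 2 + (Q b - Q a)"
    using bound \<open>x \<in> X\<close> \<open>a \<le> b\<close> by (intro cSUP_least) auto
  then have "N \<le> 2 * A + 2 * Q b - 2 * Q a" unfolding N_def[symmetric] by linarith
  with le_N[OF \<open>x \<in> X\<close> \<open>r \<in> {a..b}\<close>] show ?thesis by (simp add: algebra_simps)
qed

lemma sup_gronwall:
  fixes U D :: "'a \<Rightarrow> real \<Rightarrow> real" and Q q :: "real \<Rightarrow> real"
  assumes "L \<ge> 0"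
    and U': "\<And>x t. x \<in> X \<Longrightarrow> t \<in> {0..<T} \<Longrightarrow> (U x has_real_derivative D x t) (at t within {0..<T})"
    and Q': "\<And>t. t \<in> {0..<T} \<Longrightarrow> (Q has_real_derivative q t) (at t within {0..<T})"
    and q_nonneg: "\<And>t. t \<in> {0..<T} \<Longrightarrow> 0 \<le> q t"
    and U_bdd: "\<And>t. t \<in> {0..<T} \<Longrightarrow> \<exists>M. \<forall>x\<in>X. \<forall>s\<in>{0..t}. \<bar>U x s\<bar> \<le> M"
    and D_bound: "\<And>t B x. t \<in> {0..<T} \<Longrightarrow> \<forall>y\<in>X. \<bar>U y t\<bar> \<le> B \<Longrightarrow> x \<in> X \<Longrightarrow> \<bar>D x t\<bar> \<le> L * B + q t"
    and U_0: "\<And>x. x \<in> X \<Longrightarrow> \<bar>U x 0\<bar> \<le> A"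
  shows "\<exists>C\<ge>0. \<forall>x\<in>X. \<forall>t\<in>{0..<T}. \<bar>U x t\<bar> \<le> C * (A + Q t - Q 0)"
proof -
  define \<delta> where "\<delta> = 1 / (2 * L + 2)"
  have "\<delta> > 0" and L_\<delta>: "L * \<delta> \<le> 1 / 2"
    using \<open>L \<ge> 0\<close> by (auto simp: \<delta>_def field_simps)
  have Q_mono: "Q s \<le> Q t" if "0 \<le> s" "s \<le> t" "t < T" for s t
    using that Q' q_nonneg
    by (intro nondecreasing_of_nonneg_derivative[where S = "{0..<T}" and Q = Q and q = q]) auto
  have up_to: "\<exists>C\<ge>0. \<forall>x\<in>X. \<forall>t\<in>{0..<T}. t \<le> k * \<delta> \<longrightarrow> \<bar>U x t\<bar> \<le> C * (A + Q t - Q 0)" for k :: nat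
  proof (induction k)
    case 0
    show ?case using U_0 by (intro exI[of _ 1]) auto
  next
    case (Suc k)
    then obtain C where "C \<ge> 0"
      and C: "\<And>x t. x \<in> X \<Longrightarrow> t \<in> {0..<T} \<Longrightarrow> t \<le> k * \<delta> \<Longrightarrow> \<bar>U x t\<bar> \<le> C * (A + Q t - Q 0)"
      by blast
    have "\<bar>U x t\<bar> \<le> (2 * C + 2) * (A + Q t - Q 0)"
      if x: "x \<in> X" and t: "t \<in> {0..<T}" "t \<le> Suc k * \<delta>" for x t
    proof -
      define a where "a = min (k * \<delta>) t"
      have a: "0 \<le> a" "a \<le> t" "a \<le> k * \<delta>" "t - a \<le> \<delta>"
        using t \<open>\<delta> > 0\<close> by (auto simp: a_def algebra_simps)
      have "0 \<le> A" using U_0[OF x] by linarith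
      have "Q 0 \<le> Q a" "Q a \<le> Q t" using a t Q_mono by auto
      have "L * (t - a) \<le> L * \<delta>" using a \<open>L \<ge> 0\<close> by (intro mult_left_mono)
      then have "L * (t - a) \<le> 1 / 2" using L_\<delta> by linarith
      moreover obtain M where "\<forall>x\<in>X. \<forall>s\<in>{0..t}. \<bar>U x s\<bar> \<le> M" using U_bdd t by blast
      then have "\<exists>M. \<forall>x\<in>X. \<forall>r\<in>{a..t}. \<bar>U x r\<bar> \<le> M"
        using a by (intro exI[of _ M]) auto
      moreover have "\<bar>U y a\<bar> \<le> C * (A + Q a - Q 0)" if "y \<in> X" for y
        using C[OF that] a t by auto
      ultimately have "\<bar>U x t\<bar> \<le> 2 * (C * (A + Q a - Q 0) + Q t - Q a)"
        using a t x by (intro sup_bound_step[OF \<open>L \<ge> 0\<close> _ _ _ U' Q' q_nonneg D_bound]) auto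
      also have "\<dots> \<le> (2 * C + 2) * (A + Q t - Q 0)"
      proof -
        have "C * (A + Q a - Q 0) \<le> C * (A + Q t - Q 0)"
          using \<open>C \<ge> 0\<close> \<open>Q a \<le> Q t\<close> by (intro mult_left_mono) auto
        then show ?thesis using \<open>0 \<le> A\<close> \<open>Q 0 \<le> Q a\<close> by (simp add: algebra_simps)
      qed
      finally show ?thesis .
    qed
    with \<open>C \<ge> 0\<close> show ?case by (intro exI[of _ "2 * C + 2"]) auto
  qed
  obtain k :: nat where "T \<le> k * \<delta>"
    using real_arch_simple[of "T / \<delta>"] \<open>\<delta> > 0\<close> by (auto simp: field_simps)
  then have "t \<le> k * \<delta>" if "t \<in> {0..<T}" for t using that by auto
  with up_to[of k] show ?thesis by blast
qed

definition blowup_rate :: "real \<Rightarrow> real \<Rightarrow> real \<Rightarrow> real" where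
  "blowup_rate T p t = (if p = 0 then - ln (T - t) else (T - t) powr - p)"

lemma has_real_derivative_blowup_rate:
  assumes "t < T" "p \<ge> 0"
  shows "(blowup_rate T p has_real_derivative (if p = 0 then 1 else p) * (T - t) powr - (p + 1))
           (at t within S)"
proof (cases "p = 0")
  case True
  have "((\<lambda>t. - ln (T - t)) has_real_derivative 1 / (T - t)) (at t within S)"
    using assms by (auto intro!: derivative_eq_intros)
  then show ?thesis using True assms by (simp add: blowup_rate_def[abs_def] powr_minus_divide)
next
  case False
  have "((\<lambda>t. (T - t) powr - p) has_real_derivative - p * (T - t) powr - (p + 1) * (0 - 1)) (at t within S)"
    using assms by (intro derivative_eq_intros) auto
  then show ?thesis using False by (simp add: blowup_rate_def[abs_def])
qed

lemma blowup_rate_pos: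
  assumes "0 < T" "T < 1" "0 \<le> t" "t < T"
  shows "0 < blowup_rate T p t"
  using assms by (auto simp: blowup_rate_def)

lemma blowup_rate_mono:
  assumes "0 \<le> s" "s \<le> t" "t < T" "p \<ge> 0"
  shows "blowup_rate T p s \<le> blowup_rate T p t"
proof (rule nondecreasing_of_nonneg_derivative[where S = UNIV and Q = "blowup_rate T p"
      and q = "\<lambda>r. (if p = 0 then 1 else p) * (T - r) powr - (p + 1)"])
  fix r assume "r \<in> {s..t}"
  then show "(blowup_rate T p has_real_derivative (if p = 0 then 1 else p) * (T - r) powr - (p + 1)) (at r)"
    using assms by (intro has_real_derivative_blowup_rate) auto
  show "0 \<le> (if p = 0 then 1 else p) * (T - r) powr - (p + 1)" using assms by simp
qed (use assms in auto)

lemma sup_bound_by_blowup_rate: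
  fixes U D :: "'a \<Rightarrow> real \<Rightarrow> real"
  assumes "0 < T" "T < 1" "p \<ge> 0" "K \<ge> 0" "L \<ge> 0"
    and U': "\<And>x t. x \<in> X \<Longrightarrow> t \<in> {0..<T} \<Longrightarrow> (U x has_real_derivative D x t) (at t within {0..<T})"
    and U_bdd: "\<And>t. t \<in> {0..<T} \<Longrightarrow> \<exists>M. \<forall>x\<in>X. \<forall>s\<in>{0..t}. \<bar>U x s\<bar> \<le> M"
    and D_bound: "\<And>t B x. t \<in> {0..<T} \<Longrightarrow> \<forall>y\<in>X. \<bar>U y t\<bar> \<le> B \<Longrightarrow> x \<in> X \<Longrightarrow>
                    \<bar>D x t\<bar> \<le> L * B + K * (T - t) powr - (p + 1)"
    and U_0: "\<And>x. x \<in> X \<Longrightarrow> \<bar>U x 0\<bar> \<le> A"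
  shows "\<exists>C\<ge>0. \<forall>x\<in>X. \<forall>t\<in>{0..<T}. \<bar>U x t\<bar> \<le> C * blowup_rate T p t"
proof (cases "X = {}")
  case False
  then have "0 \<le> A" using U_0 by force
  define c where "c = (if p = 0 then 1 else p)"
  have "c > 0" using \<open>p \<ge> 0\<close> by (auto simp: c_def)
  define Q where "Q = (\<lambda>t. K / c * blowup_rate T p t)"
  have "\<exists>C\<ge>0. \<forall>x\<in>X. \<forall>t\<in>{0..<T}. \<bar>U x t\<bar> \<le> C * (A + Q t - Q 0)"
  proof (rule sup_gronwall[where L = L and X = X and U = U and D = D and q = "\<lambda>t. K * (T - t) powr - (p + 1)"])
    fix t assume "t \<in> {0..<T}"
    then show "(Q has_real_derivative K * (T - t) powr - (p + 1)) (at t within {0..<T})"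
      using has_real_derivative_blowup_rate[of t T p] \<open>p \<ge> 0\<close> \<open>c > 0\<close>
      unfolding Q_def c_def by (auto intro!: derivative_eq_intros)
  qed (use assms in auto)
  then obtain C where "C \<ge> 0" and C: "\<And>x t. x \<in> X \<Longrightarrow> t \<in> {0..<T} \<Longrightarrow> \<bar>U x t\<bar> \<le> C * (A + Q t - Q 0)"
    by blast
  define r0 where "r0 = blowup_rate T p 0"
  have "r0 > 0" using blowup_rate_pos[of T 0 p] assms by (simp add: r0_def)
  have "\<bar>U x t\<bar> \<le> (C * (A / r0 + K / c)) * blowup_rate T p t" if "x \<in> X" "t \<in> {0..<T}" for x t
  proof -
    have "r0 \<le> blowup_rate T p t" using that blowup_rate_mono[of 0 t T p] \<open>p \<ge> 0\<close> by (simp add: r0_def)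
    then have "A \<le> A / r0 * blowup_rate T p t"
      using \<open>0 \<le> A\<close> \<open>r0 > 0\<close> by (simp add: field_simps mult_left_mono)
    moreover have "0 \<le> Q 0" using \<open>r0 > 0\<close> \<open>c > 0\<close> \<open>K \<ge> 0\<close> by (simp add: Q_def r0_def)
    ultimately have "A + Q t - Q 0 \<le> (A / r0 + K / c) * blowup_rate T p t"
      by (simp add: Q_def algebra_simps)
    then show ?thesis using C[OF that] \<open>C \<ge> 0\<close> by (smt (verit) mult.assoc mult_left_mono)
  qed
  moreover have "0 \<le> C * (A / r0 + K / c)"
    using \<open>C \<ge> 0\<close> \<open>0 \<le> A\<close> \<open>r0 > 0\<close> \<open>K \<ge> 0\<close> \<open>c > 0\<close> by simp
  ultimately show ?thesis by blast
qed auto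

lemma null_sets_nonzero_off_ess_supp_out:
  fixes h :: "'a::euclidean_space \<Rightarrow> real"
  assumes h_meas: "set_borel_measurable lborel (UNIV - \<Omega>) h"
    and "V \<in> sets lborel" and disjoint: "V \<inter> ess_supp_out \<Omega> h = {}"
  shows "{w \<in> V. w \<notin> \<Omega> \<and> h w \<noteq> 0} \<in> null_sets lborel"
proof -
  define H where "H = {w. w \<notin> \<Omega> \<and> h w \<noteq> 0}"
  have "(\<lambda>w. indicator (UNIV - \<Omega>) w * h w :: real) \<in> borel_measurable lborel"
    using h_meas unfolding set_borel_measurable_def by simp
  then have "{w \<in> space lborel. indicator (UNIV - \<Omega>) w * h w \<noteq> (0::real)} \<in> sets lborel"
    by measurable
  moreover have "{w \<in> space lborel. indicator (UNIV - \<Omega>) w * h w \<noteq> (0::real)} = H"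
    by (auto simp: H_def split: split_indicator)
  ultimately have H_sets: "H \<in> sets lborel" by simp
  have "negligible (H \<inter> V)"
  proof (rule locally_negligible_alt[THEN iffD2], intro ballI)
    fix z assume z: "z \<in> H \<inter> V"
    then have "z \<notin> ess_supp_out \<Omega> h" using disjoint by blast
    then obtain e where "e > 0" and "\<not> 0 < emeasure lborel {w \<in> ball z e. w \<notin> \<Omega> \<and> h w \<noteq> 0}"
      unfolding ess_supp_out_def by blast
    moreover have "{w \<in> ball z e. w \<notin> \<Omega> \<and> h w \<noteq> 0} = ball z e \<inter> H" by (auto simp: H_def)
    ultimately have "ball z e \<inter> H \<in> null_sets lborel"
      using H_sets by (intro null_setsI) auto
    then have "negligible (ball z e \<inter> H)"
      by (simp add: negligible_iff_null_sets null_sets_completionI)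
    then have "negligible ((H \<inter> V) \<inter> ball z e)" by (rule negligible_subset) blast
    moreover have "openin (top_of_set (H \<inter> V)) ((H \<inter> V) \<inter> ball z e)"
      by (intro openin_open_Int) simp
    moreover have "z \<in> (H \<inter> V) \<inter> ball z e" using z \<open>e > 0\<close> by simp
    ultimately show "\<exists>U. openin (top_of_set (H \<inter> V)) U \<and> z \<in> U \<and> negligible U"
      by blast
  qed
  moreover have "H \<inter> V \<in> sets lborel" using H_sets \<open>V \<in> sets lborel\<close> by simp
  moreover have "{w \<in> V. w \<notin> \<Omega> \<and> h w \<noteq> 0} = H \<inter> V" by (auto simp: H_def)
  ultimately show ?thesis by (simp add: negligible_iff_null_sets null_sets_completion_iff)
qed

locale dispersal_kernel =
  fixes J :: "'a::euclidean_space \<Rightarrow> real" and d :: real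
  assumes J_measurable: "J \<in> borel_measurable lborel"
    and J_integrable: "integrable lborel J"
    and J_integral: "(LINT z|lborel. J z) = 1"
    and J_nonneg: "\<And>z. 0 \<le> J z"
    and J_symmetric: "\<And>z. J (- z) = J z"
    and J_vanishes: "\<And>z. d \<le> norm z \<Longrightarrow> J z = 0"
begin

lemma
  shows integrable_J_shift: "integrable lborel (\<lambda>y. J (x - y))"
    and integral_J_shift: "(LINT y|lborel. J (x - y)) = 1"
proof -
  have reflect: "(\<lambda>y. J (x - y)) = (\<lambda>y. J (- x + y))"
    using J_symmetric by (metis minus_diff_eq uminus_add_conv_diff)
  have shift: "(+) (- x) \<in> measurable lborel borel" by simp
  have "J \<in> borel_measurable borel" using J_measurable by simp
  moreover have "integrable (distr lborel borel ((+) (- x))) J"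
    using J_integrable by (simp add: lborel_distr_plus)
  ultimately show "integrable lborel (\<lambda>y. J (x - y))"
    unfolding reflect by (rule iffD1[OF integrable_distr_eq[OF shift]])
  have "integral\<^sup>L (distr lborel borel ((+) (- x))) J = (LINT y|lborel. J (- x + y))"
    by (rule integral_distr[OF shift]) (use J_measurable in simp)
  then show "(LINT y|lborel. J (x - y)) = 1"
    unfolding reflect using J_integral by (simp add: lborel_distr_plus)
qed

lemma abs_set_integral_le_by_kernel:
  assumes "0 \<le> B" and bound: "\<And>y. y \<in> A \<Longrightarrow> \<bar>f y\<bar> \<le> J (x - y) * B"
  shows "\<bar>LINT y:A|lborel. f y\<bar> \<le> B"
proof -
  have "\<bar>LINT y:A|lborel. f y\<bar> \<le> (LINT y|lborel. norm (indicator A y *\<^sub>R f y))"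
    unfolding set_lebesgue_integral_def using integral_norm_bound by (metis real_norm_def)
  also have "\<dots> \<le> (LINT y|lborel. J (x - y) * B)"
  proof (rule integral_mono')
    show "integrable lborel (\<lambda>y. J (x - y) * B)" using integrable_J_shift by simp
    show "0 \<le> J (x - y) * B" for y using J_nonneg \<open>0 \<le> B\<close> by simp
    show "norm (indicator A y *\<^sub>R f y) \<le> J (x - y) * B" for y
      using bound[of y] J_nonneg \<open>0 \<le> B\<close> by (cases "y \<in> A") auto
  qed
  also have "\<dots> = B" using integral_J_shift by simp
  finally show ?thesis .
qed

lemma abs_nonlocal_diffusion_le:
  assumes "0 \<le> M" and near: "\<And>y. y \<in> A \<Longrightarrow> dist x y < d \<Longrightarrow> \<bar>v y\<bar> \<le> M"
  shows "\<bar>LINT y:A|lborel. J (x - y) * (v y - v x)\<bar> \<le> M + \<bar>v x\<bar>"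
proof (rule abs_set_integral_le_by_kernel)
  show "0 \<le> M + \<bar>v x\<bar>" using \<open>0 \<le> M\<close> by simp
  fix y assume "y \<in> A"
  show "\<bar>J (x - y) * (v y - v x)\<bar> \<le> J (x - y) * (M + \<bar>v x\<bar>)"
  proof (cases "dist x y < d")
    case True
    then have "\<bar>v y - v x\<bar> \<le> M + \<bar>v x\<bar>" using near[OF \<open>y \<in> A\<close>] by linarith
    then show ?thesis using J_nonneg by (simp add: abs_mult mult_left_mono)
  next
    case False
    then show ?thesis using J_vanishes by (simp add: dist_norm)
  qed
qed

lemma kernel_integral_vanishes_away_from_ess_supp_out:
  assumes h_meas: "set_borel_measurable lborel (UNIV - \<Omega>) h"
    and far: "\<And>y. y \<in> ess_supp_out \<Omega> h \<Longrightarrow> d \<le> dist x y"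
  shows "(LINT y:(UNIV - \<Omega>)|lborel. J (x - y) * h y) = 0"
proof -
  have "ball x d \<inter> ess_supp_out \<Omega> h = {}" using far by fastforce
  then have null: "{w \<in> ball x d. w \<notin> \<Omega> \<and> h w \<noteq> 0} \<in> null_sets lborel"
    by (intro null_sets_nonzero_off_ess_supp_out h_meas) auto
  have "AE y in lborel. indicator (UNIV - \<Omega>) y *\<^sub>R (J (x - y) * h y) = 0"
  proof (rule AE_I'[OF null], rule subsetI)
    fix y assume "y \<in> {y \<in> space lborel. indicator (UNIV - \<Omega>) y *\<^sub>R (J (x - y) * h y) \<noteq> 0}"
    then have "y \<notin> \<Omega>" "h y \<noteq> 0" "J (x - y) \<noteq> 0" by (auto split: split_indicator_asm)
    then show "y \<in> {w \<in> ball x d. w \<notin> \<Omega> \<and> h w \<noteq> 0}"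
      using J_vanishes[of "x - y"] by (force simp: dist_norm)
  qed
  then show ?thesis unfolding set_lebesgue_integral_def by (rule integral_eq_zero_AE)
qed

end

lemma Omset_0 [simp]: "Omset \<Omega> h d 0 = \<Omega>"
  by (simp add: Omset_def)

lemma Omset_Suc: "Omset \<Omega> h d (Suc k) = Omset \<Omega> h d k - Bset \<Omega> h d (Suc k)"
  by (simp add: Omset_def Bset_def Let_def)

lemma Bset_0: "Bset \<Omega> h d 0 = ess_supp_out \<Omega> h"
  by (simp add: Bset_def)

lemma Bset_Suc: "Bset \<Omega> h d (Suc k) = {x \<in> Omset \<Omega> h d k. \<exists>y\<in>Bset \<Omega> h d k. dist x y < d}"
  by (simp add: Omset_def Bset_def Let_def)

lemma Omset_subset: "Omset \<Omega> h d k \<subseteq> \<Omega>"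
  by (induction k) (auto simp: Omset_Suc)

lemma Omset_antimono: "k \<le> j \<Longrightarrow> Omset \<Omega> h d j \<subseteq> Omset \<Omega> h d k"
  by (induction j rule: dec_induct) (auto simp: Omset_Suc)

lemma Omset_Suc_near:
  assumes "x \<in> Omset \<Omega> h d (Suc k)" "y \<in> \<Omega>" "dist x y < d"
  shows "y \<in> Omset \<Omega> h d k"
  using assms(1)
proof (induction k)
  case (Suc k)
  then have x: "x \<in> Omset \<Omega> h d (Suc k)" using Omset_antimono[of "Suc k" "Suc (Suc k)" \<Omega> h d] by auto
  then have y: "y \<in> Omset \<Omega> h d k" using Suc.IH by blast
  show ?case
  proof (rule ccontr)
    assume "y \<notin> Omset \<Omega> h d (Suc k)"
    then have "y \<in> Bset \<Omega> h d (Suc k)" using y by (simp add: Omset_Suc)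
    then have "x \<in> Bset \<Omega> h d (Suc (Suc k))" using x assms(3) by (subst Bset_Suc) auto
    then show False using Suc.prems by (simp add: Omset_Suc)
  qed
qed (use assms(2) in simp)

lemma Omset_Suc_far_from_ess_supp_out:
  assumes "x \<in> Omset \<Omega> h d (Suc k)" "y \<in> ess_supp_out \<Omega> h"
  shows "d \<le> dist x y"
proof -
  have "x \<in> Omset \<Omega> h d (Suc 0)" using assms(1) Omset_antimono[of "Suc 0" "Suc k"] by auto
  then show ?thesis using assms(2) by (auto simp: Omset_Suc Bset_Suc Bset_0)
qed

locale nonlocal_problem = dispersal_kernel J d
  for J :: "'a::euclidean_space \<Rightarrow> real" and d :: real +
  fixes \<Omega> :: "'a set" and h u0 :: "'a \<Rightarrow> real" and T \<alpha> :: real and u :: "'a \<Rightarrow> real \<Rightarrow> real"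
  assumes T_pos: "0 < T" and T_less_1: "T < 1" and alpha_ge_1: "1 \<le> \<alpha>"
    and h_measurable: "set_borel_measurable lborel (UNIV - \<Omega>) h"
    and h_bounded: "\<exists>M. \<forall>y\<in>UNIV - \<Omega>. \<bar>h y\<bar> \<le> M"
    and u0_bounded: "\<exists>M. \<forall>x\<in>\<Omega>. \<bar>u0 x\<bar> \<le> M"
    and solution: "is_solution \<Omega> J h T \<alpha> u0 u"
begin

definition source :: "'a \<Rightarrow> real" where
  "source x = (LINT y:(UNIV - \<Omega>)|lborel. J (x - y) * h y)"

definition rhs :: "'a \<Rightarrow> real \<Rightarrow> real" where
  "rhs x t = (LINT y:\<Omega>|lborel. J (x - y) * (u y t - u x t)) + (T - t) powr - \<alpha> * source x"

lemma source_bounded: "\<exists>K\<ge>0. \<forall>x. \<bar>source x\<bar> \<le> K"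
proof -
  obtain M where M: "\<forall>y\<in>UNIV - \<Omega>. \<bar>h y\<bar> \<le> M" using h_bounded by blast
  have "\<bar>source x\<bar> \<le> max M 0" for x
    unfolding source_def
  proof (rule abs_set_integral_le_by_kernel)
    fix y assume "y \<in> UNIV - \<Omega>"
    then have "\<bar>h y\<bar> \<le> max M 0" using M by (meson le_max_iff_disj)
    then show "\<bar>J (x - y) * h y\<bar> \<le> J (x - y) * max M 0"
      using J_nonneg by (simp add: abs_mult mult_left_mono)
  qed simp
  then show ?thesis by (intro exI[of _ "max M 0"]) auto
qed

lemma source_vanishes: "x \<in> Omset \<Omega> h d (Suc k) \<Longrightarrow> source x = 0"
  unfolding source_def
  by (intro kernel_integral_vanishes_away_from_ess_supp_out h_measurable Omset_Suc_far_from_ess_supp_out)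

lemma sup_bound_on_subset:
  assumes "X \<subseteq> \<Omega>" "p \<ge> 0" "K \<ge> 0"
    and rhs_bound: "\<And>t B x. t \<in> {0..<T} \<Longrightarrow> \<forall>y\<in>X. \<bar>u y t\<bar> \<le> B \<Longrightarrow> x \<in> X \<Longrightarrow>
                      \<bar>rhs x t\<bar> \<le> 2 * B + K * (T - t) powr - (p + 1)"
  shows "\<exists>C\<ge>0. \<forall>x\<in>X. \<forall>t\<in>{0..<T}. \<bar>u x t\<bar> \<le> C * blowup_rate T p t"
proof -
  obtain A where A: "\<forall>x\<in>\<Omega>. \<bar>u0 x\<bar> \<le> A" using u0_bounded by blast
  note sol = solution[unfolded is_solution_def]
  show ?thesis
  proof (rule sup_bound_by_blowup_rate[where L = 2 and K = K and D = rhs and A = A])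
    fix x t assume "x \<in> X" "t \<in> {0..<T}"
    then show "(u x has_real_derivative rhs x t) (at t within {0..<T})"
      using sol \<open>X \<subseteq> \<Omega>\<close> by (auto simp: rhs_def source_def)
  next
    fix t :: real assume "t \<in> {0..<T}"
    then obtain M where "\<forall>y\<in>\<Omega>. \<forall>s\<in>{0..t}. \<bar>u y s\<bar> \<le> M" using sol by blast
    then show "\<exists>M. \<forall>x\<in>X. \<forall>s\<in>{0..t}. \<bar>u x s\<bar> \<le> M" using \<open>X \<subseteq> \<Omega>\<close> by blast
  next
    fix x assume "x \<in> X"
    then show "\<bar>u x 0\<bar> \<le> A" using sol A \<open>X \<subseteq> \<Omega>\<close> by auto
  qed (use assms T_pos T_less_1 in auto)
qed

lemma bound_on_Omset_0:
  "\<exists>C\<ge>0. \<forall>x\<in>Omset \<Omega> h d 0. \<forall>t\<in>{0..<T}. \<bar>u x t\<bar> \<le> C * blowup_rate T (\<alpha> - 1) t"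
proof -
  obtain K where "K \<ge> 0" and K: "\<And>x. \<bar>source x\<bar> \<le> K" using source_bounded by blast
  show ?thesis
  proof (rule sup_bound_on_subset[where K = K])
    fix t B x assume t: "t \<in> {0..<T}" and B: "\<forall>y\<in>Omset \<Omega> h d 0. \<bar>u y t\<bar> \<le> B"
      and x: "x \<in> Omset \<Omega> h d 0"
    have "\<bar>LINT y:\<Omega>|lborel. J (x - y) * (u y t - u x t)\<bar> \<le> B + \<bar>u x t\<bar>"
      using B x by (intro abs_nonlocal_diffusion_le) auto
    moreover have "\<bar>(T - t) powr - \<alpha> * source x\<bar> \<le> K * (T - t) powr - \<alpha>"
      using K[of x] by (simp add: abs_mult mult.commute mult_right_mono)
    moreover have "\<bar>u x t\<bar> \<le> B" using B x by blast
    ultimately show "\<bar>rhs x t\<bar> \<le> 2 * B + K * (T - t) powr - (\<alpha> - 1 + 1)"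
      unfolding rhs_def by simp
  qed (use \<open>K \<ge> 0\<close> alpha_ge_1 in auto)
qed

lemma bound_on_Omset_Suc:
  assumes "p \<ge> 0" "C \<ge> 0"
    and bound: "\<forall>x\<in>Omset \<Omega> h d k. \<forall>t\<in>{0..<T}. \<bar>u x t\<bar> \<le> C * blowup_rate T (p + 1) t"
  shows "\<exists>C'\<ge>0. \<forall>x\<in>Omset \<Omega> h d (Suc k). \<forall>t\<in>{0..<T}. \<bar>u x t\<bar> \<le> C' * blowup_rate T p t"
proof (rule sup_bound_on_subset[where K = C])
  fix t B x assume t: "t \<in> {0..<T}" and B: "\<forall>y\<in>Omset \<Omega> h d (Suc k). \<bar>u y t\<bar> \<le> B"
    and x: "x \<in> Omset \<Omega> h d (Suc k)"
  have "\<bar>u y t\<bar> \<le> C * (T - t) powr - (p + 1)" if "y \<in> \<Omega>" "dist x y < d" for y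
  proof -
    have "y \<in> Omset \<Omega> h d k" using Omset_Suc_near[OF x that] .
    then have "\<bar>u y t\<bar> \<le> C * blowup_rate T (p + 1) t" using bound t by blast
    then show ?thesis using \<open>p \<ge> 0\<close> by (simp add: blowup_rate_def)
  qed
  then have "\<bar>LINT y:\<Omega>|lborel. J (x - y) * (u y t - u x t)\<bar> \<le> C * (T - t) powr - (p + 1) + \<bar>u x t\<bar>"
    using \<open>C \<ge> 0\<close> by (intro abs_nonlocal_diffusion_le) auto
  moreover have "\<bar>u x t\<bar> \<le> B" using B x by blast
  ultimately show "\<bar>rhs x t\<bar> \<le> 2 * B + C * (T - t) powr - (p + 1)"
    unfolding rhs_def source_vanishes[OF x] by simp
qed (use assms Omset_subset[of \<Omega> h d "Suc k"] in auto)

lemma bound_on_Omset: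
  "real (Suc k) \<le> \<alpha> \<Longrightarrow>
     \<exists>C\<ge>0. \<forall>x\<in>Omset \<Omega> h d k. \<forall>t\<in>{0..<T}. \<bar>u x t\<bar> \<le> C * blowup_rate T (\<alpha> - Suc k) t"
proof (induction k)
  case 0
  then show ?case using bound_on_Omset_0 by simp
next
  case (Suc k)
  then obtain C where "C \<ge> 0"
    and "\<forall>x\<in>Omset \<Omega> h d k. \<forall>t\<in>{0..<T}. \<bar>u x t\<bar> \<le> C * blowup_rate T ((\<alpha> - Suc (Suc k)) + 1) t"
    by (auto simp: algebra_simps)
  then show ?case using Suc.prems by (intro bound_on_Omset_Suc) auto
qed

lemma uniform_bound_on_Omset:
  "\<exists>C. \<forall>i. 1 \<le> i \<longrightarrow> real i \<le> \<alpha> \<longrightarrow>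
     (\<forall>x\<in>Omset \<Omega> h d (i - 1). \<forall>t\<in>{0..<T}. \<bar>u x t\<bar> \<le> C * blowup_rate T (\<alpha> - i) t)"
proof -
  define I where "I = {i. 1 \<le> i \<and> real i \<le> \<alpha>}"
  have "finite I" unfolding I_def
    by (rule finite_subset[of _ "{..nat \<lfloor>\<alpha>\<rfloor>}"]) (auto simp: le_nat_iff le_floor_iff)
  have "\<forall>i\<in>I. \<exists>C\<ge>0. \<forall>x\<in>Omset \<Omega> h d (i - 1). \<forall>t\<in>{0..<T}. \<bar>u x t\<bar> \<le> C * blowup_rate T (\<alpha> - i) t"
  proof
    fix i assume "i \<in> I"
    then obtain k where "i = Suc k" "real (Suc k) \<le> \<alpha>" by (cases i) (auto simp: I_def)
    then show "\<exists>C\<ge>0. \<forall>x\<in>Omset \<Omega> h d (i - 1). \<forall>t\<in>{0..<T}. \<bar>u x t\<bar> \<le> C * blowup_rate T (\<alpha> - i) t"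
      using bound_on_Omset[of k] by simp
  qed
  then obtain Cf where Cf: "\<And>i. i \<in> I \<Longrightarrow> 0 \<le> Cf i \<and> (\<forall>x\<in>Omset \<Omega> h d (i - 1). \<forall>t\<in>{0..<T}.
      \<bar>u x t\<bar> \<le> Cf i * blowup_rate T (\<alpha> - i) t)"
    by metis
  have "\<bar>u x t\<bar> \<le> sum Cf I * blowup_rate T (\<alpha> - i) t"
    if "i \<in> I" "x \<in> Omset \<Omega> h d (i - 1)" "t \<in> {0..<T}" for i x t
  proof -
    have "\<bar>u x t\<bar> \<le> Cf i * blowup_rate T (\<alpha> - i) t" using Cf that by blast
    also have "\<dots> \<le> sum Cf I * blowup_rate T (\<alpha> - i) t"
      using that Cf \<open>finite I\<close> less_imp_le[OF blowup_rate_pos[OF T_pos T_less_1]]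
      by (intro mult_right_mono member_le_sum) auto
    finally show ?thesis .
  qed
  then show ?thesis by (intro exI[of _ "sum Cf I"]) (auto simp: I_def)
qed

end

theorem lemma4p2:
  fixes \<Omega> :: "(real ^ 'n) set"
    and J h u0 :: "real ^ 'n \<Rightarrow> real"
    and u :: "real ^ 'n \<Rightarrow> real \<Rightarrow> real"
    and d T \<alpha> :: real
  assumes dom: "smooth_domain \<Omega>"
    and J_meas: "J \<in> borel_measurable lborel"
    and J_bdd: "\<exists>M. \<forall>z. \<bar>J z\<bar> \<le> M"
    and J_nonneg: "\<forall>z. J z \<ge> 0"
    and J_sym: "\<forall>z. J (- z) = J z"
    and J_int: "integrable lborel J" "(LINT z|lborel. J z) = 1"
    and d_pos: "d > 0"
    and J_pos: "\<forall>z. norm z < d \<longrightarrow> J z > 0"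
    and J_zero: "\<forall>z. norm z \<ge> d \<longrightarrow> J z = 0"
    and T: "0 < T" "T < 1"
    and alpha: "\<alpha> \<ge> 1"
    and h_meas: "set_borel_measurable lborel (UNIV - \<Omega>) h"
    and h_bdd: "\<exists>M. \<forall>y\<in>UNIV - \<Omega>. \<bar>h y\<bar> \<le> M"
    and h_nonneg: "\<forall>y\<in>UNIV - \<Omega>. h y \<ge> 0"
    and h_pos: "(LINT x:\<Omega>|lborel. (LINT y:(UNIV - \<Omega>)|lborel. J (x - y) * h y)) > 0"
    and u0_meas: "set_borel_measurable lborel \<Omega> u0"
    and u0_bdd: "\<exists>M. \<forall>x\<in>\<Omega>. \<bar>u0 x\<bar> \<le> M"
    and u0_nonneg: "\<forall>x\<in>\<Omega>. u0 x \<ge> 0"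
    and sol: "is_solution \<Omega> J h T \<alpha> u0 u"
  shows "\<exists>C. \<forall>i::nat. \<forall>t\<in>{0..<T}. \<forall>x\<in>Omset \<Omega> h d (i - 1).
           1 \<le> i \<and> real i \<le> \<alpha> \<longrightarrow>
             (real i \<noteq> \<alpha> \<longrightarrow> u x t \<le> C / (T - t) powr (\<alpha> - real i)) \<and>
             (real i = \<alpha> \<longrightarrow> u x t \<le> - C * ln (T - t))"
proof -
  interpret nonlocal_problem J d \<Omega> h u0 T \<alpha> u
    using assms by unfold_locales auto
  obtain C where C: "\<And>i x t. 1 \<le> i \<Longrightarrow> real i \<le> \<alpha> \<Longrightarrow> x \<in> Omset \<Omega> h d (i - 1) \<Longrightarrow> t \<in> {0..<T} \<Longrightarrow>
      u x t \<le> C * blowup_rate T (\<alpha> - i) t"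
    using uniform_bound_on_Omset abs_le_D1 by meson
  show ?thesis
  proof (intro exI[of _ C] allI ballI impI conjI)
    fix i :: nat and t x assume "t \<in> {0..<T}" "x \<in> Omset \<Omega> h d (i - 1)" "1 \<le> i \<and> real i \<le> \<alpha>"
    then have "u x t \<le> C * blowup_rate T (\<alpha> - i) t" using C by blast
    then show "real i \<noteq> \<alpha> \<Longrightarrow> u x t \<le> C / (T - t) powr (\<alpha> - real i)"
      and "real i = \<alpha> \<Longrightarrow> u x t \<le> - C * ln (T - t)"
      using powr_minus_divide[of "T - t" "\<alpha> - i"] by (auto simp: blowup_rate_def)
  qed
qed

end
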